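(* Let $k\ge2$, let $\mathcal{F}\subset 2^{[n]}$ be weakly $k$-cross-free, and let $0\le a\le b\le\log n$ be reals. For each integer $i$ with $a<i\le b$ let $\Gamma_i$ be a collection of pairwise disjoint nonempty chains contained in $\mathcal{F}_i$ such that $\{\max\mathcal{C}:\mathcal{C}\in\Gamma_i\}$ is an antichain, and let $\Gamma_{a,b}=\bigcup_{a<i\le b}\Gamma_i$. For each $\mathcal{C}\in\Gamma_{a,b}$ fix a set $Y(\mathcal{C})$ as described in the context, and for $y\in[n]$ let $d(y)$ be the number of chains $\mathcal{C}\in\Gamma_{a,b}$ with $y\in Y(\mathcal{C})$ and $g(y)$ the number of $k$-tuples of chains in $\Gamma_{a,b}$ that are good for $y$. Then for every $y\in[n]$, $$g(y)\geq \binom{d(y)/(k-1)^{2}}{k}.$$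
   Context: Sets $A,B$ are weakly crossing if $A\setminus B$, $B\setminus A$, $A\cap B$ are all non-empty; a family is weakly $k$-cross-free if it contains no $k$ pairwise weakly crossing sets. $\mathcal{F}_i=\{X\in\mathcal{F}:2^i<|X|\le 2^{i+1}\}$. A chain $\mathcal{C}$ is written $\mathcal{C}(1)\subsetneq\dots\subsetneq\mathcal{C}(l)$, $\min\mathcal{C}=\mathcal{C}(1)$, $\max\mathcal{C}=\mathcal{C}(l)$. $Y(\mathcal{C})$ is a set obtained by choosing one element of $\mathcal{C}(1)$ and one element of each difference $\mathcal{C}(j+1)\setminus\mathcal{C}(j)$, $j=1,\dots,l-1$ (so $|Y(\mathcal{C})|=|\mathcal{C}|$). A $k$-tuple $(\mathcal{C}_1,\dots,\mathcal{C}_k)$ of chains in $\Gamma_{a,b}$ with $\mathcal{C}_l\in\Gamma_{j_l}$ for some $j_1<\dots<j_k$ is good for $y$ if (i) $y\in Y(\mathcal{C}_l)$ for all $l\in[k]$, and (ii) letting $C_l$ be the smallest set of $\mathcal{C}_l$ containing $y$, we have $C_1\subset\dots\subset C_k$. Extended binomial coefficient: for real $x$, $\binom{x}{k}=x(x-1)\cdots(x-k+1)/k!$ if $x\ge k-1$ and $0$ otherwise. *)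

theory Defs
  imports Complex_Main
begin

definition weakly_crossing :: "'a set \<Rightarrow> 'a set \<Rightarrow> bool" where
  "weakly_crossing A B \<longleftrightarrow> A - B \<noteq> {} \<and> B - A \<noteq> {} \<and> A \<inter> B \<noteq> {}"

definition weakly_k_cross_free :: "nat \<Rightarrow> 'a set set \<Rightarrow> bool" where
  "weakly_k_cross_free k F \<longleftrightarrow>
     \<not> (\<exists>S. S \<subseteq> F \<and> card S = k \<and> pairwise weakly_crossing S)"

definition level :: "'a set set \<Rightarrow> nat \<Rightarrow> 'a set set" where
  "level F i = {X \<in> F. 2 ^ i < card X \<and> card X \<le> 2 ^ (i + 1)}"

definition is_chain :: "'a set set \<Rightarrow> bool" where
  "is_chain C \<longleftrightarrow> (\<forall>X\<in>C. \<forall>Z\<in>C. X \<subseteq> Z \<or> Z \<subseteq> X)"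

definition is_antichain :: "'a set set \<Rightarrow> bool" where
  "is_antichain A \<longleftrightarrow> (\<forall>X\<in>A. \<forall>Z\<in>A. X \<subseteq> Z \<longrightarrow> X = Z)"

definition chain_max :: "'a set set \<Rightarrow> 'a set" where
  "chain_max C = (THE X. X \<in> C \<and> (\<forall>Z\<in>C. Z \<subseteq> X))"

definition smallest_containing :: "'a set set \<Rightarrow> 'a \<Rightarrow> 'a set" where
  "smallest_containing C y = (THE X. X \<in> C \<and> y \<in> X \<and> (\<forall>Z\<in>C. y \<in> Z \<longrightarrow> X \<subseteq> Z))"

definition is_Y :: "'a set set \<Rightarrow> 'a set \<Rightarrow> bool" where
  "is_Y C Y \<longleftrightarrow> (\<exists>Cs ys. set Cs = C \<and> sorted_wrt (\<subset>) Cs \<and> length ys = length Cs \<and>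
      Y = set ys \<and> (Cs \<noteq> [] \<longrightarrow> ys ! 0 \<in> Cs ! 0) \<and>
      (\<forall>j. j + 1 < length Cs \<longrightarrow> ys ! (j + 1) \<in> Cs ! (j + 1) - Cs ! j))"

definition Gamma_ab :: "(nat \<Rightarrow> 'a set set set) \<Rightarrow> real \<Rightarrow> real \<Rightarrow> 'a set set set" where
  "Gamma_ab \<Gamma> a b = (\<Union>i\<in>{i. a < real i \<and> real i \<le> b}. \<Gamma> i)"

definition good_tuple ::
  "nat \<Rightarrow> (nat \<Rightarrow> 'a set set set) \<Rightarrow> real \<Rightarrow> real \<Rightarrow> ('a set set \<Rightarrow> 'a set) \<Rightarrow> 'a
     \<Rightarrow> 'a set set list \<Rightarrow> bool" where
  "good_tuple k \<Gamma> a b Y y Cs \<longleftrightarrow> length Cs = k \<and>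
     (\<exists>j :: nat \<Rightarrow> nat. (\<forall>l<k. a < real (j l) \<and> real (j l) \<le> b \<and> Cs ! l \<in> \<Gamma> (j l)) \<and>
        (\<forall>l. l + 1 < k \<longrightarrow> j l < j (l + 1))) \<and>
     (\<forall>l<k. y \<in> Y (Cs ! l)) \<and>
     (\<forall>l. l + 1 < k \<longrightarrow> smallest_containing (Cs ! l) y \<subseteq> smallest_containing (Cs ! (l + 1)) y)"

definition ext_binom :: "real \<Rightarrow> nat \<Rightarrow> real" where
  "ext_binom x k = (if x \<ge> real k - 1 then (\<Prod>i<k. (x - real i)) / fact k else 0)"

end

theory Submission imports Defs begin

text \<open>Order the chains C with y \<in> Y(C) by letting C precede C' when C lies on a lower level
  and its smallest member containing y is contained in that of C'. Every k-element chain of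
  this order is a good tuple. An antichain has at most (k-1)^2 elements: the maxima of its
  chains on one level all contain y and form an antichain, so they weakly cross pairwise; and
  for chains on distinct levels the smallest members containing y weakly cross, because a set
  of a lower level cannot contain one of a higher level. By Mirsky's theorem the order has a
  chain of length at least d(y)/(k-1)^2, and each of its k-subsets is a good tuple.\<close>

lemma finite_chain_has_greatest:
  assumes "finite C" "C \<noteq> {}" "is_chain C"
  shows "\<exists>X\<in>C. \<forall>Z\<in>C. Z \<subseteq> X"
proof -
  obtain X where "X \<in> C" "\<forall>Z\<in>C. X \<subseteq> Z \<longrightarrow> X = Z"
    using finite_has_maximal[OF assms(1,2)] by blast
  then show ?thesis using assms(3) unfolding is_chain_def by blast
qed

lemma finite_chain_has_least:
  assumes "finite C" "C \<noteq> {}" "is_chain C"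
  shows "\<exists>X\<in>C. \<forall>Z\<in>C. X \<subseteq> Z"
proof -
  obtain X where "X \<in> C" "\<forall>Z\<in>C. Z \<subseteq> X \<longrightarrow> X = Z"
    using finite_has_minimal[OF assms(1,2)] by blast
  then show ?thesis using assms(3) unfolding is_chain_def by metis
qed

lemma chain_max_greatest:
  assumes "finite C" "C \<noteq> {}" "is_chain C"
  shows "chain_max C \<in> C \<and> (\<forall>Z\<in>C. Z \<subseteq> chain_max C)"
proof -
  obtain X where X: "X \<in> C" "\<forall>Z\<in>C. Z \<subseteq> X"
    using finite_chain_has_greatest[OF assms] by blast
  have "chain_max C = X"
    unfolding chain_max_def by (rule the1_equality) (use X in auto)
  then show ?thesis using X by simp
qed

lemma smallest_containing_least:
  assumes "finite C" "is_chain C" "y \<in> \<Union>C"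
  shows "smallest_containing C y \<in> C \<and> y \<in> smallest_containing C y \<and>
         (\<forall>Z\<in>C. y \<in> Z \<longrightarrow> smallest_containing C y \<subseteq> Z)"
proof -
  have "is_chain {X\<in>C. y \<in> X}" using assms(2) by (auto simp: is_chain_def)
  then obtain X where X: "X \<in> C" "y \<in> X" "\<forall>Z\<in>C. y \<in> Z \<longrightarrow> X \<subseteq> Z"
    using finite_chain_has_least[of "{X\<in>C. y \<in> X}"] assms(1,3) by auto
  have "smallest_containing C y = X"
    unfolding smallest_containing_def by (rule the1_equality) (use X in auto)
  then show ?thesis using X by simp
qed

lemma is_Y_subset_Union:
  assumes "is_Y C Y"
  shows "Y \<subseteq> \<Union>C"
proof
  fix x assume "x \<in> Y"
  obtain Cs ys where Cs: "set Cs = C" "length ys = length Cs" "Y = set ys"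
      "Cs \<noteq> [] \<longrightarrow> ys ! 0 \<in> Cs ! 0" "\<forall>j. j + 1 < length Cs \<longrightarrow> ys ! (j + 1) \<in> Cs ! (j + 1) - Cs ! j"
    using assms unfolding is_Y_def by blast
  then obtain j where j: "j < length ys" "ys ! j = x" using \<open>x \<in> Y\<close> by (auto simp: in_set_conv_nth)
  have "ys ! j \<in> Cs ! j" using Cs j by (cases j) auto
  then show "x \<in> \<Union>C" using Cs(1,2) j by auto
qed

lemma level_index_le:
  assumes "X \<in> level F i" "Z \<in> level F j" "X \<subseteq> Z" "finite Z"
  shows "i \<le> j"
proof -
  have "card X \<le> card Z" using card_mono[OF assms(4,3)] .
  then have "(2::nat) ^ i < 2 ^ (j + 1)" using assms(1,2) unfolding level_def by auto
  then have "i < j + 1" by (rule power_less_imp_less_exp[rotated]) simp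
  then show ?thesis by simp
qed

lemma weakly_k_cross_free_card_less:
  assumes "weakly_k_cross_free k F" "h ` A \<subseteq> F"
    and crossing: "\<And>x x'. x \<in> A \<Longrightarrow> x' \<in> A \<Longrightarrow> x \<noteq> x' \<Longrightarrow> weakly_crossing (h x) (h x')"
  shows "card A < k"
proof (rule ccontr)
  assume "\<not> card A < k"
  have "inj_on h A"
    using crossing by (fastforce simp: inj_on_def weakly_crossing_def)
  then have "k \<le> card (h ` A)" using \<open>\<not> card A < k\<close> by (simp add: card_image)
  then obtain T where "T \<subseteq> h ` A" "card T = k"
    using obtain_subset_with_card_n by blast
  moreover have "pairwise weakly_crossing (h ` A)"
    using crossing by (auto simp: pairwise_def)
  ultimately have "T \<subseteq> F \<and> card T = k \<and> pairwise weakly_crossing T"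
    using assms(2) pairwise_subset by blast
  then show False using assms(1) unfolding weakly_k_cross_free_def by blast
qed

lemma ext_binom_le_binomial:
  assumes "x \<le> real m"
  shows "ext_binom x k \<le> real (m choose k)"
proof (cases "x \<ge> real k - 1")
  case False then show ?thesis by (simp add: ext_binom_def)
next
  case True
  have "(\<Prod>i<k. x - real i) \<le> (\<Prod>i<k. real m - real i)"
    by (rule prod_mono) (use True assms in auto)
  moreover have "real (m choose k) = (\<Prod>i<k. real m - real i) / fact k"
    by (simp add: binomial_gbinomial gbinomial_prod_rev atLeast0LessThan)
  ultimately show ?thesis using True by (simp add: ext_binom_def divide_right_mono)
qed

lemma exists_minimal_below:
  assumes "finite S" "asymp_on S r" "transp_on S r" "h \<in> S"
  obtains z where "z \<in> S" "\<forall>w\<in>S. \<not> r w z" "z = h \<or> r z h"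
proof -
  obtain z where z: "z \<in> S" "z = h \<or> r z h" and min: "\<forall>w\<in>S. r w z \<longrightarrow> \<not> (w = h \<or> r w h)"
    using Finite_Set.bex_min_element_with_property[OF assms(1-3), of "\<lambda>w. w = h \<or> r w h"]
      assms(4) by blast
  have "\<not> r w z" if "w \<in> S" for w
  proof
    assume "r w z"
    then have "r w h" using z transp_onD[OF assms(3) that z(1) assms(4)] by auto
    then show False using min that \<open>r w z\<close> by blast
  qed
  then show thesis using that z by blast
qed

text \<open>Mirsky's theorem: peel off the minimal elements, which form an antichain, and recurse.\<close>

lemma long_chain_if_antichains_small:
  assumes "finite S" "asymp_on S r" "transp_on S r"
    and "\<And>A. A \<subseteq> S \<Longrightarrow> \<forall>x\<in>A. \<forall>z\<in>A. \<not> r x z \<Longrightarrow> card A \<le> K"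
  shows "\<exists>L. set L \<subseteq> S \<and> sorted_wrt r L \<and> distinct L \<and> card S \<le> length L * K"
  using assms
proof (induction "card S" arbitrary: S rule: less_induct)
  case less
  note fin = less.prems(1) and asym = less.prems(2) and tr = less.prems(3)
  show ?case
  proof (cases "S = {}")
    case True then show ?thesis by auto
  next
    case False
    define T where "T = {x\<in>S. \<forall>w\<in>S. \<not> r w x}"
    have minimal_below: "\<exists>z\<in>T. z = h \<or> r z h" if "h \<in> S" for h
      using exists_minimal_below[OF fin asym tr that] unfolding T_def by blast
    have "T \<subseteq> S" "T \<noteq> {}" using False minimal_below by (auto simp: T_def)
    have card_T: "card T \<le> K" by (rule less.prems(4)) (auto simp: T_def)
    have card_S: "card S = card T + card (S - T)"
      using card_Diff_subset[OF finite_subset[OF \<open>T \<subseteq> S\<close> fin] \<open>T \<subseteq> S\<close>]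
        card_mono[OF fin \<open>T \<subseteq> S\<close>] by simp
    have "card (S - T) < card S"
      using card_S \<open>T \<noteq> {}\<close> finite_subset[OF \<open>T \<subseteq> S\<close> fin] by (simp add: card_gt_0_iff)
    then obtain L where L: "set L \<subseteq> S - T" "sorted_wrt r L" "distinct L" "card (S - T) \<le> length L * K"
      using less.hyps[of "S - T"] less.prems(4) fin asymp_on_subset[OF asym] transp_on_subset[OF tr]
      by (meson Diff_subset finite_Diff subset_trans)
    show ?thesis
    proof (cases L)
      case Nil
      then have "S = T" using L(4) \<open>T \<subseteq> S\<close> fin by auto
      obtain t where "t \<in> T" using \<open>T \<noteq> {}\<close> by blast
      then show ?thesis using \<open>S = T\<close> card_T by (intro exI[of _ "[t]"]) auto
    next
      case (Cons h L')
      then have "h \<in> S - T" using L(1) by auto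
      then obtain z where z: "z \<in> T" "r z h" using minimal_below by (auto simp: T_def)
      have "r z x" if "x \<in> set L" for x
      proof -
        have "x = h \<or> r h x" using L(2) Cons that by auto
        moreover have "z \<in> S" "x \<in> S" using z \<open>T \<subseteq> S\<close> L(1) that by auto
        ultimately show ?thesis using transp_onD[OF tr] z(2) \<open>h \<in> S - T\<close> by blast
      qed
      moreover have "z \<notin> set L" using L(1) z by auto
      ultimately show ?thesis using L z \<open>T \<subseteq> S\<close> card_S card_T
        by (intro exI[of _ "z # L"]) (auto simp: algebra_simps)
    qed
  qed
qed

lemma sorted_wrt_nths: "sorted_wrt P xs \<Longrightarrow> sorted_wrt P (nths xs I)"
proof (induction xs arbitrary: I)
  case Nil then show ?case by simp
next
  case (Cons x xs)
  then show ?case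
    using set_nths_subset[of xs "{j. Suc j \<in> I}"]
    by (auto simp: nths_Cons sorted_wrt_append)
qed

lemma binomial_le_card_if_sublists_in:
  assumes "distinct xs" "finite A"
    and "\<And>I. I \<subseteq> {..<length xs} \<Longrightarrow> card I = k \<Longrightarrow> nths xs I \<in> A"
  shows "length xs choose k \<le> card A"
proof -
  let ?Is = "{I. I \<subseteq> {..<length xs} \<and> card I = k}"
  have "inj_on (nths xs) ?Is"
  proof (rule inj_onI)
    fix I J assume IJ: "I \<in> ?Is" "J \<in> ?Is" "nths xs I = nths xs J"
    have mem: "xs ! i \<in> set (nths xs I') \<longleftrightarrow> i \<in> I'" if "i < length xs" for i I'
      using assms(1) that by (auto simp: set_nths nth_eq_iff_index_eq)
    have "i \<in> I \<longleftrightarrow> i \<in> J" if "i < length xs" for i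
      using mem[OF that, of I] mem[OF that, of J] IJ(3) by simp
    then show "I = J" using IJ(1,2) by blast
  qed
  then have "card ?Is \<le> card A"
    using card_inj_on_le assms(2,3) by blast
  then show ?thesis using n_subsets[of "{..<length xs}" k] by simp
qed

locale chains_through_point =
  fixes k :: nat and F :: "'a set set" and \<Gamma> :: "nat \<Rightarrow> 'a set set set" and a b :: real
    and Y :: "'a set set \<Rightarrow> 'a set" and y :: 'a
  assumes finite_family: "finite F"
    and finite_members: "X \<in> F \<Longrightarrow> finite X"
    and cross_free: "weakly_k_cross_free k F"
    and Gamma: "\<And>i. a < real i \<Longrightarrow> real i \<le> b \<Longrightarrow>
           (\<forall>C\<in>\<Gamma> i. is_chain C \<and> C \<noteq> {} \<and> C \<subseteq> level F i) \<and>
           (\<forall>C\<in>\<Gamma> i. \<forall>C'\<in>\<Gamma> i. C \<noteq> C' \<longrightarrow> C \<inter> C' = {}) \<and>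
           is_antichain (chain_max ` \<Gamma> i)"
    and Y_choice: "\<And>C. C \<in> Gamma_ab \<Gamma> a b \<Longrightarrow> is_Y C (Y C)"
begin

definition chains_through :: "'a set set set" where
  "chains_through = {C \<in> Gamma_ab \<Gamma> a b. y \<in> Y C}"

definition chain_level :: "'a set set \<Rightarrow> nat" where
  "chain_level C = (SOME i. a < real i \<and> real i \<le> b \<and> C \<in> \<Gamma> i)"

definition precedes :: "'a set set \<Rightarrow> 'a set set \<Rightarrow> bool" where
  "precedes C C' \<longleftrightarrow>
     smallest_containing C y \<subseteq> smallest_containing C' y \<and> chain_level C < chain_level C'"

lemma chain_level_spec:
  assumes "C \<in> Gamma_ab \<Gamma> a b"
  shows "a < real (chain_level C) \<and> real (chain_level C) \<le> b \<and> C \<in> \<Gamma> (chain_level C)"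
  unfolding chain_level_def by (rule someI_ex) (use assms in \<open>auto simp: Gamma_ab_def\<close>)

lemma chain_in_level:
  assumes "C \<in> Gamma_ab \<Gamma> a b"
  shows "is_chain C" "C \<subseteq> level F (chain_level C)"
proof -
  note spec = chain_level_spec[OF assms]
  show "is_chain C" "C \<subseteq> level F (chain_level C)"
    using Gamma[OF spec[THEN conjunct1] spec[THEN conjunct2, THEN conjunct1]] spec by blast+
qed

lemma chain_subset_family: "C \<in> Gamma_ab \<Gamma> a b \<Longrightarrow> C \<subseteq> F"
  using chain_in_level(2) Collect_restrict unfolding level_def by (rule subset_trans)

lemma finite_Gamma_ab: "finite (Gamma_ab \<Gamma> a b)"
proof -
  have "Gamma_ab \<Gamma> a b \<subseteq> Pow F" using chain_subset_family by auto
  then show ?thesis using finite_family by (simp add: finite_subset)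
qed

lemma finite_chains_through: "finite chains_through"
  unfolding chains_through_def using finite_Gamma_ab by simp

lemma finite_chain: "C \<in> Gamma_ab \<Gamma> a b \<Longrightarrow> finite C"
  using chain_subset_family finite_family finite_subset by blast

lemma smallest_containing_through:
  assumes "C \<in> chains_through"
  shows "smallest_containing C y \<in> C \<and> y \<in> smallest_containing C y \<and>
         (\<forall>Z\<in>C. y \<in> Z \<longrightarrow> smallest_containing C y \<subseteq> Z)"
proof -
  have "C \<in> Gamma_ab \<Gamma> a b" "y \<in> Y C" using assms by (auto simp: chains_through_def)
  then have "y \<in> \<Union>C" using is_Y_subset_Union[OF Y_choice] by blast
  then show ?thesis
    using smallest_containing_least[OF finite_chain chain_in_level(1)] \<open>C \<in> Gamma_ab \<Gamma> a b\<close>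
    by blast
qed

lemma chain_max_through:
  assumes "C \<in> chains_through"
  shows "chain_max C \<in> C" "y \<in> chain_max C"
proof -
  have C: "C \<in> Gamma_ab \<Gamma> a b" using assms by (simp add: chains_through_def)
  moreover have "C \<noteq> {}" using smallest_containing_through[OF assms] by blast
  ultimately have "chain_max C \<in> C \<and> (\<forall>Z\<in>C. Z \<subseteq> chain_max C)"
    using chain_max_greatest finite_chain chain_in_level(1) by blast
  then show "chain_max C \<in> C" "y \<in> chain_max C"
    using smallest_containing_through[OF assms] by blast+
qed

lemma maxima_weakly_crossing:
  assumes "C \<in> chains_through" "C' \<in> chains_through" "chain_level C = chain_level C'" "C \<noteq> C'"
  shows "weakly_crossing (chain_max C) (chain_max C')"
proof -
  let ?i = "chain_level C"
  have "a < real ?i" "real ?i \<le> b" "C \<in> \<Gamma> ?i"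
    using assms(1) chain_level_spec by (auto simp: chains_through_def)
  have "C' \<in> \<Gamma> ?i" using assms(2) chain_level_spec[of C'] by (simp add: assms(3) chains_through_def)
  note \<Gamma>_i = Gamma[OF \<open>a < real ?i\<close> \<open>real ?i \<le> b\<close>]
  have "C \<inter> C' = {}"
    using \<Gamma>_i[THEN conjunct2, THEN conjunct1] \<open>C \<in> \<Gamma> ?i\<close> \<open>C' \<in> \<Gamma> ?i\<close> assms(4) by blast
  then have "chain_max C \<noteq> chain_max C'"
    using chain_max_through(1)[OF assms(1)] chain_max_through(1)[OF assms(2)] by (metis disjoint_iff)
  moreover have "chain_max C \<in> chain_max ` \<Gamma> ?i" "chain_max C' \<in> chain_max ` \<Gamma> ?i"
    using \<open>C \<in> \<Gamma> ?i\<close> \<open>C' \<in> \<Gamma> ?i\<close> by blast+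
  moreover note \<Gamma>_i[THEN conjunct2, THEN conjunct2]
  ultimately have "\<not> chain_max C \<subseteq> chain_max C'" "\<not> chain_max C' \<subseteq> chain_max C"
    unfolding is_antichain_def by metis+
  moreover have "y \<in> chain_max C" "y \<in> chain_max C'"
    using chain_max_through(2) assms(1,2) by blast+
  ultimately show ?thesis unfolding weakly_crossing_def by blast
qed

lemma smallest_member_not_subset:
  assumes "C \<in> chains_through" "C' \<in> chains_through" "chain_level C \<noteq> chain_level C'"
    and "\<not> precedes C C'"
  shows "\<not> smallest_containing C y \<subseteq> smallest_containing C' y"
proof
  assume sub: "smallest_containing C y \<subseteq> smallest_containing C' y"
  have level: "smallest_containing D y \<in> level F (chain_level D)" if "D \<in> chains_through" for D
    using that smallest_containing_through chain_in_level(2) by (fastforce simp: chains_through_def)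
  have "finite (smallest_containing C' y)"
    using level[OF assms(2)] finite_members by (simp add: level_def)
  then have "chain_level C \<le> chain_level C'"
    using level_index_le[OF level[OF assms(1)] level[OF assms(2)] sub] by blast
  then show False using assms(3,4) sub by (simp add: precedes_def)
qed

lemma smallest_members_weakly_crossing:
  assumes "C \<in> chains_through" "C' \<in> chains_through" "chain_level C \<noteq> chain_level C'"
    and "\<not> precedes C C'" "\<not> precedes C' C"
  shows "weakly_crossing (smallest_containing C y) (smallest_containing C' y)"
proof -
  have "\<not> smallest_containing C y \<subseteq> smallest_containing C' y"
    "\<not> smallest_containing C' y \<subseteq> smallest_containing C y"
    using smallest_member_not_subset assms by metis+
  moreover have "y \<in> smallest_containing C y" "y \<in> smallest_containing C' y"
    using smallest_containing_through assms(1,2) by blast+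
  ultimately show ?thesis unfolding weakly_crossing_def by blast
qed

lemma card_level_class_less:
  assumes "A \<subseteq> chains_through"
  shows "card {C\<in>A. chain_level C = i} < k"
proof (rule weakly_k_cross_free_card_less[OF cross_free, where h = chain_max])
  show "chain_max ` {C\<in>A. chain_level C = i} \<subseteq> F"
    using assms chain_max_through(1) chain_subset_family by (fastforce simp: chains_through_def)
  show "weakly_crossing (chain_max C) (chain_max C')"
    if "C \<in> {C\<in>A. chain_level C = i}" "C' \<in> {C\<in>A. chain_level C = i}" "C \<noteq> C'" for C C'
  proof (rule maxima_weakly_crossing)
    show "C \<in> chains_through" "C' \<in> chains_through" "chain_level C = chain_level C'"
      using that assms by auto
  qed (fact that(3))
qed

lemma card_levels_less:
  assumes "A \<subseteq> chains_through" "\<forall>C\<in>A. \<forall>C'\<in>A. \<not> precedes C C'"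
  shows "card (chain_level ` A) < k"
proof (rule weakly_k_cross_free_card_less[OF cross_free,
      where h = "\<lambda>i. smallest_containing (inv_into A chain_level i) y"])
  have rep: "inv_into A chain_level i \<in> chains_through"
    "inv_into A chain_level i \<in> A" "chain_level (inv_into A chain_level i) = i"
    if "i \<in> chain_level ` A" for i
    using that assms(1) by (auto simp: inv_into_into f_inv_into_f)
  show "(\<lambda>i. smallest_containing (inv_into A chain_level i) y) ` chain_level ` A \<subseteq> F"
  proof clarify
    fix C assume "C \<in> A"
    then have "inv_into A chain_level (chain_level C) \<in> chains_through" using rep by blast
    then show "smallest_containing (inv_into A chain_level (chain_level C)) y \<in> F"
      using smallest_containing_through chain_subset_family by (auto simp: chains_through_def)
  qed
  show "weakly_crossing (smallest_containing (inv_into A chain_level i) y)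
                        (smallest_containing (inv_into A chain_level i') y)"
    if "i \<in> chain_level ` A" "i' \<in> chain_level ` A" "i \<noteq> i'" for i i'
    by (rule smallest_members_weakly_crossing) (use rep[OF that(1)] rep[OF that(2)] that(3) assms(2) in auto)
qed

lemma card_antichain_le:
  assumes "A \<subseteq> chains_through" "\<forall>C\<in>A. \<forall>C'\<in>A. \<not> precedes C C'"
  shows "card A \<le> (k - 1) * (k - 1)"
proof -
  have "finite A" using assms(1) finite_chains_through finite_subset by blast
  have "card A = card (\<Union>i\<in>chain_level ` A. {C\<in>A. chain_level C = i})"
    by (rule arg_cong[where f = card]) blast
  also have "\<dots> \<le> (\<Sum>i\<in>chain_level ` A. card {C\<in>A. chain_level C = i})"
    by (rule card_UN_le) (use \<open>finite A\<close> in simp)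
  also have "\<dots> \<le> card (chain_level ` A) * (k - 1)"
  proof -
    have "card {C\<in>A. chain_level C = i} \<le> k - 1" for i
      using card_level_class_less[OF assms(1), of i] by linarith
    then show ?thesis using sum_bounded_above[of "chain_level ` A" _ "k - 1"] by simp
  qed
  also have "\<dots> \<le> (k - 1) * (k - 1)"
    using card_levels_less[OF assms] by (intro mult_le_mono1) linarith
  finally show ?thesis .
qed

lemma precedes_strict_order:
  "asymp_on chains_through precedes" "transp_on chains_through precedes"
  by (auto simp: asymp_on_def transp_on_def precedes_def)

lemma good_tuple_if_sorted:
  assumes "set Cs \<subseteq> chains_through" "sorted_wrt precedes Cs" "length Cs = k"
  shows "good_tuple k \<Gamma> a b Y y Cs"
  unfolding good_tuple_def
proof (intro conjI allI impI)
  have through: "Cs ! l \<in> chains_through" if "l < k" for l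
    using assms(1,3) that nth_mem by blast
  have step: "precedes (Cs ! l) (Cs ! (l + 1))" if "l + 1 < k" for l
    using assms(2,3) that by (simp add: sorted_wrt_iff_nth_less)
  show "length Cs = k" by fact
  show "\<exists>j. (\<forall>l<k. a < real (j l) \<and> real (j l) \<le> b \<and> Cs ! l \<in> \<Gamma> (j l)) \<and>
           (\<forall>l. l + 1 < k \<longrightarrow> j l < j (l + 1))"
    using through step chain_level_spec by (intro exI[of _ "\<lambda>l. chain_level (Cs ! l)"])
      (auto simp: precedes_def chains_through_def)
  show "y \<in> Y (Cs ! l)" if "l < k" for l
    using through[OF that] by (simp add: chains_through_def)
  show "smallest_containing (Cs ! l) y \<subseteq> smallest_containing (Cs ! (l + 1)) y" if "l + 1 < k" for l
    using step[OF that] by (simp add: precedes_def)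
qed

lemma finite_good_tuples: "finite {Cs. good_tuple k \<Gamma> a b Y y Cs}"
proof (rule finite_subset)
  show "{Cs. good_tuple k \<Gamma> a b Y y Cs} \<subseteq> {Cs. set Cs \<subseteq> Gamma_ab \<Gamma> a b \<and> length Cs = k}"
  proof clarify
    fix Cs assume "good_tuple k \<Gamma> a b Y y Cs"
    then obtain j where "length Cs = k"
      and j: "\<forall>l<k. a < real (j l) \<and> real (j l) \<le> b \<and> Cs ! l \<in> \<Gamma> (j l)"
      unfolding good_tuple_def by blast
    have "Cs ! l \<in> Gamma_ab \<Gamma> a b" if "l < k" for l
      using j that unfolding Gamma_ab_def by auto
    then show "set Cs \<subseteq> Gamma_ab \<Gamma> a b \<and> length Cs = k"
      using \<open>length Cs = k\<close> by (auto simp: in_set_conv_nth)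
  qed
  show "finite {Cs. set Cs \<subseteq> Gamma_ab \<Gamma> a b \<and> length Cs = k}"
    using finite_lists_length_eq[OF finite_Gamma_ab] .
qed

theorem card_good_tuples_ge:
  assumes "k \<ge> 2"
  shows "ext_binom (real (card chains_through) / (real k - 1) ^ 2) k
           \<le> real (card {Cs. good_tuple k \<Gamma> a b Y y Cs})"
proof -
  obtain L where L: "set L \<subseteq> chains_through" "sorted_wrt precedes L" "distinct L"
      "card chains_through \<le> length L * ((k - 1) * (k - 1))"
    using long_chain_if_antichains_small[OF finite_chains_through precedes_strict_order
        card_antichain_le] by blast
  have ratio: "real (card chains_through) / (real k - 1) ^ 2 \<le> real (length L)"
  proof -
    have "(real k - 1) ^ 2 = real ((k - 1) * (k - 1))"
      using assms by (simp add: power2_eq_square of_nat_diff)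
    moreover have "real (card chains_through) \<le> real (length L * ((k - 1) * (k - 1)))"
      using L(4) by (simp only: of_nat_le_iff)
    ultimately have "real (card chains_through) \<le> real (length L) * (real k - 1) ^ 2"
      by simp
    moreover have "(real k - 1) ^ 2 > 0" using assms by simp
    ultimately show ?thesis by (simp only: pos_divide_le_eq)
  qed
  have sublists: "length L choose k \<le> card {Cs. good_tuple k \<Gamma> a b Y y Cs}"
  proof (rule binomial_le_card_if_sublists_in[OF L(3) finite_good_tuples])
    fix I assume "I \<subseteq> {..<length L}" "card I = k"
    moreover have "{i. i < length L \<and> i \<in> I} = I" using \<open>I \<subseteq> {..<length L}\<close> by blast
    ultimately have "length (nths L I) = k" by (simp add: length_nths)
    moreover have "set (nths L I) \<subseteq> chains_through"
      using set_nths_subset L(1) by (rule subset_trans)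
    ultimately show "nths L I \<in> {Cs. good_tuple k \<Gamma> a b Y y Cs}"
      using good_tuple_if_sorted sorted_wrt_nths[OF L(2)] by simp
  qed
  have "ext_binom (real (card chains_through) / (real k - 1) ^ 2) k \<le> real (length L choose k)"
    using ratio by (rule ext_binom_le_binomial)
  also have "\<dots> \<le> real (card {Cs. good_tuple k \<Gamma> a b Y y Cs})"
    using sublists by (simp only: of_nat_le_iff)
  finally show ?thesis .
qed

end

theorem claim3:
  fixes n k :: nat and F :: "nat set set" and a b :: real
    and \<Gamma> :: "nat \<Rightarrow> nat set set set" and Y :: "nat set set \<Rightarrow> nat set" and y :: nat
  assumes "k \<ge> 2"
    and "F \<subseteq> Pow {1..n}"
    and "weakly_k_cross_free k F"
    and "0 \<le> a" and "a \<le> b" and "b \<le> log 2 (real n)"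
    and "\<And>i. a < real i \<Longrightarrow> real i \<le> b \<Longrightarrow>
           (\<forall>C\<in>\<Gamma> i. is_chain C \<and> C \<noteq> {} \<and> C \<subseteq> level F i) \<and>
           (\<forall>C\<in>\<Gamma> i. \<forall>C'\<in>\<Gamma> i. C \<noteq> C' \<longrightarrow> C \<inter> C' = {}) \<and>
           is_antichain (chain_max ` \<Gamma> i)"
    and "\<And>C. C \<in> Gamma_ab \<Gamma> a b \<Longrightarrow> is_Y C (Y C)"
    and "y \<in> {1..n}"
  shows "real (card {Cs. good_tuple k \<Gamma> a b Y y Cs})
           \<ge> ext_binom (real (card {C \<in> Gamma_ab \<Gamma> a b. y \<in> Y C}) / (real k - 1) ^ 2) k"
proof -
  interpret chains_through_point k F \<Gamma> a b Y y
  proof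
    show "finite F" using assms(2) finite_subset by blast
    show "finite X" if "X \<in> F" for X using assms(2) that finite_subset by blast
  qed (fact assms(3,7,8))+
  show ?thesis using card_good_tuples_ge[OF assms(1)] by (simp add: chains_through_def)
qed

end
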